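(* Let $n\geq1$. In $M_n$, both the left-lcm and the right-lcm of the generators $\rho_1,\rho_2,\dots,\rho_n$ are equal to $\rho_n^{\,n}=\rho_1(\rho_n\rho_1)^{n-1}$.
   Context: $M_n$ denotes the monoid with generators $\rho_1,\dots,\rho_n$ and relations $\rho_1\rho_n\rho_i=\rho_{i+1}\rho_n$ for $1\leq i\leq n-1$. The right-lcm of a set of elements is a common right-multiple of all of them that left-divides every common right-multiple; the left-lcm is defined symmetrically with left-multiples and right-divisibility. *)

theory Defs
  imports Main
begin

text \<open>The monoid M_n is presented by generators rho_1..rho_n, encoded as the letters
  1..n of words (nat lists), modulo the congruence generated by the relations
  rho_1 rho_n rho_i = rho_(i+1) rho_n for 1 <= i <= n-1.\<close>

definition Mword :: "nat \<Rightarrow> nat list \<Rightarrow> bool" where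
  "Mword n w \<longleftrightarrow> set w \<subseteq> {1..n}"

definition Mrel :: "nat \<Rightarrow> (nat list \<times> nat list) set" where
  "Mrel n = {([1, n, i], [i + 1, n]) | i. 1 \<le> i \<and> i \<le> n - 1}"

inductive Meq :: "nat \<Rightarrow> nat list \<Rightarrow> nat list \<Rightarrow> bool" for n where
  step: "(l, r) \<in> Mrel n \<Longrightarrow> Meq n (u @ l @ v) (u @ r @ v)"
| refl: "Meq n w w"
| sym: "Meq n u v \<Longrightarrow> Meq n v u"
| trans: "Meq n u v \<Longrightarrow> Meq n v w \<Longrightarrow> Meq n u w"

definition Mldiv :: "nat \<Rightarrow> nat list \<Rightarrow> nat list \<Rightarrow> bool" where
  "Mldiv n a b \<longleftrightarrow> (\<exists>c. Mword n c \<and> Meq n (a @ c) b)"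

definition Mrdiv :: "nat \<Rightarrow> nat list \<Rightarrow> nat list \<Rightarrow> bool" where
  "Mrdiv n a b \<longleftrightarrow> (\<exists>c. Mword n c \<and> Meq n (c @ a) b)"

definition is_right_lcm :: "nat \<Rightarrow> nat list set \<Rightarrow> nat list \<Rightarrow> bool" where
  "is_right_lcm n S m \<longleftrightarrow> Mword n m \<and> (\<forall>s\<in>S. Mldiv n s m) \<and>
     (\<forall>m'. Mword n m' \<and> (\<forall>s\<in>S. Mldiv n s m') \<longrightarrow> Mldiv n m m')"

definition is_left_lcm :: "nat \<Rightarrow> nat list set \<Rightarrow> nat list \<Rightarrow> bool" where
  "is_left_lcm n S m \<longleftrightarrow> Mword n m \<and> (\<forall>s\<in>S. Mrdiv n s m) \<and>
     (\<forall>m'. Mword n m' \<and> (\<forall>s\<in>S. Mrdiv n s m') \<longrightarrow> Mrdiv n m m')"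

end

theory Submission
  imports Defs
begin

text \<open>
  Every relation preserves the sum of the letters of a word, so facts about M_n can be proved
  by induction on this weight. Write D_k for rho_n^k. The relations yield the complement rule
  rho_i D_i rho_(j-i) = rho_j D_i for i < j, and by induction on the weight every equality
  rho_a u = rho_b v with a < b goes through it: u = D_a rho_(b-a) t and v = D_a t for some t.
  The transitivity step of this induction needs left cancellation in smaller weight, which the
  normal form itself provides. Mirror-symmetrically, equalities u rho_a = v rho_b go through
  the hooks rho_k D_k.
  Taking a = n-1 and b = n shows that every common right-multiple of rho_(n-1) and rho_n is a
  right-multiple of rho_n D_(n-1) = D_n, and likewise on the left for rho_1 and rho_2; since
  every generator divides D_n on both sides, D_n is both lcms.
\<close>

declare Meq.trans[trans]

lemma Meq_append_cong: "Meq n x y \<Longrightarrow> Meq n (a @ x @ b) (a @ y @ b)"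
proof (induction rule: Meq.induct)
  case (step l r u v)
  have "Meq n ((a @ u) @ l @ (v @ b)) ((a @ u) @ r @ (v @ b))" by (rule Meq.step[OF step])
  then show ?case by simp
qed (auto intro: Meq.intros)

lemma Meq_append_congI: "Meq n x y \<Longrightarrow> a @ x @ b = p \<Longrightarrow> a @ y @ b = q \<Longrightarrow> Meq n p q"
  using Meq_append_cong by blast

lemma Meq_append_left: "Meq n x y \<Longrightarrow> Meq n (a @ x) (a @ y)"
  using Meq_append_cong[of n x y a "[]"] by simp

lemma Meq_append_right: "Meq n x y \<Longrightarrow> Meq n (x @ b) (y @ b)"
  using Meq_append_cong[of n x y "[]" b] by simp

lemma Meq_Cons: "Meq n x y \<Longrightarrow> Meq n (a # x) (a # y)"
  using Meq_append_left[of n x y "[a]"] by simp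

lemma Meq_rel: "1 \<le> i \<Longrightarrow> i \<le> n - 1 \<Longrightarrow> Meq n (u @ [1, n, i] @ v) (u @ [i + 1, n] @ v)"
  by (rule Meq.step) (auto simp: Mrel_def)

lemma Meq_invariants: "Meq n x y \<Longrightarrow> (Mword n x \<longleftrightarrow> Mword n y) \<and> sum_list x = sum_list y"
proof (induction rule: Meq.induct)
  case (step l r u v)
  then obtain i where "l = [1, n, i]" "r = [i + 1, n]" "1 \<le> i" "i \<le> n - 1"
    by (auto simp: Mrel_def)
  then show ?case by (auto simp: Mword_def)
qed auto

lemma Meq_Mword: "Meq n x y \<Longrightarrow> Mword n x \<Longrightarrow> Mword n y"
  using Meq_invariants by blast

lemma Meq_sum_list: "Meq n x y \<Longrightarrow> sum_list x = sum_list y"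
  using Meq_invariants by blast

lemma Mword_append: "Mword n (x @ y) \<longleftrightarrow> Mword n x \<and> Mword n y"
  by (auto simp: Mword_def)

lemma Mword_Cons: "Mword n (a # y) \<longleftrightarrow> a \<in> {1..n} \<and> Mword n y"
  by (auto simp: Mword_def)

lemma Meq_complement:
  "1 \<le> i \<Longrightarrow> i < j \<Longrightarrow> j \<le> n \<Longrightarrow> Meq n (i # replicate i n @ [j - i]) (j # replicate i n)"
proof (induction i arbitrary: j)
  case 0
  then show ?case by simp
next
  case (Suc i)
  show ?case
  proof (cases "i = 0")
    case True
    then have "Meq n ([] @ [1, n, j - 1] @ []) ([] @ [j - 1 + 1, n] @ [])"
      using Suc.prems by (intro Meq_rel) auto
    then show ?thesis using True Suc.prems by simp
  next
    case False
    have "Suc i # replicate (Suc i) n @ [j - Suc i] = [] @ [i + 1, n] @ (replicate i n @ [j - Suc i])"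
      by simp
    also have "Meq n \<dots> ([] @ [1, n, i] @ (replicate i n @ [j - Suc i]))"
      by (rule Meq.sym, rule Meq_rel) (use False Suc.prems in auto)
    also have "\<dots> = [1, n] @ (i # replicate i n @ [(j - 1) - i])"
      by simp
    also have "Meq n \<dots> ([1, n] @ ((j - 1) # replicate i n))"
      using False Suc.prems by (intro Meq_append_left Suc.IH) auto
    also have "\<dots> = [] @ [1, n, j - 1] @ replicate i n"
      by simp
    also have "Meq n \<dots> ([] @ [j - 1 + 1, n] @ replicate i n)"
      using Suc.prems by (intro Meq_rel) auto
    also have "\<dots> = j # replicate (Suc i) n"
      using Suc.prems by simp
    finally show ?thesis .
  qed
qed

definition eq_by_left_complement :: "nat \<Rightarrow> nat \<Rightarrow> nat list \<Rightarrow> nat \<Rightarrow> nat list \<Rightarrow> bool" where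
  "eq_by_left_complement n a u b v \<longleftrightarrow> (a = b \<and> Meq n u v)
     \<or> (a < b \<and> (\<exists>t. Meq n u (replicate a n @ [b - a] @ t) \<and> Meq n v (replicate a n @ t)))
     \<or> (b < a \<and> (\<exists>t. Meq n v (replicate b n @ [a - b] @ t) \<and> Meq n u (replicate b n @ t)))"

lemma eq_by_left_complement_sym:
  "eq_by_left_complement n a u b v \<Longrightarrow> eq_by_left_complement n b v a u"
  unfolding eq_by_left_complement_def by (auto intro: Meq.sym)

lemma eq_by_left_complement_Meq_left:
  "Meq n u u' \<Longrightarrow> eq_by_left_complement n a u' c w \<Longrightarrow> eq_by_left_complement n a u c w"
  unfolding eq_by_left_complement_def by (meson Meq.trans)

lemma eq_by_left_complement_Meq_right:
  "Meq n w w' \<Longrightarrow> eq_by_left_complement n a u c w' \<Longrightarrow> eq_by_left_complement n a u c w"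
  unfolding eq_by_left_complement_def by (meson Meq.trans Meq.sym)

lemma eq_by_left_complement_same_head: "eq_by_left_complement n a u a v \<Longrightarrow> Meq n u v"
  unfolding eq_by_left_complement_def by auto

locale left_complemented_below =
  fixes n W :: nat
  assumes IH: "\<And>a u b v. Mword n (a # u) \<Longrightarrow> sum_list (a # u) < W \<Longrightarrow>
    Meq n (a # u) (b # v) \<Longrightarrow> eq_by_left_complement n a u b v"
begin

lemma cancel_prefix:
  "Mword n (z @ t) \<Longrightarrow> sum_list (z @ t) < W \<Longrightarrow> Meq n (z @ t) (z @ s) \<Longrightarrow> Meq n t s"
proof (induction z)
  case (Cons d z)
  have "eq_by_left_complement n d (z @ t) d (z @ s)" using IH Cons.prems by simp
  then have "Meq n (z @ t) (z @ s)" by (rule eq_by_left_complement_same_head)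
  then show ?case using Cons by (auto simp: Mword_Cons)
qed simp

lemma trans_lt_lt:
  assumes mv: "Mword n v" and wv: "sum_list v < W"
    and ab: "eq_by_left_complement n a u b v" and bc: "eq_by_left_complement n b v c w"
    and o: "a < b" "b < c" "c \<le> n"
  shows "eq_by_left_complement n a u c w"
proof -
  from ab o obtain t where u1: "Meq n u (replicate a n @ [b - a] @ t)"
    and v1: "Meq n v (replicate a n @ t)"
    unfolding eq_by_left_complement_def by auto
  from bc o obtain s where v2: "Meq n v (replicate b n @ [c - b] @ s)"
    and w2: "Meq n w (replicate b n @ s)"
    unfolding eq_by_left_complement_def by auto
  have rb: "replicate b n = replicate a n @ replicate (b - a) n"
    using o by (simp add: replicate_add[symmetric])
  have "Meq n (replicate a n @ t) (replicate a n @ (replicate (b - a) n @ [c - b] @ s))"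
    using Meq.trans[OF Meq.sym[OF v1] v2] rb by simp
  then have t1: "Meq n t (replicate (b - a) n @ [c - b] @ s)"
    using cancel_prefix[OF Meq_Mword[OF v1 mv]] Meq_sum_list[OF v1] wv by simp
  have "Meq n u (replicate a n @ [b - a] @ t)" by (rule u1)
  also have "Meq n \<dots> (replicate a n @ [b - a] @ (replicate (b - a) n @ [c - b] @ s))"
    by (rule Meq_append_congI[OF t1, of "replicate a n @ [b - a]" "[]"]) simp_all
  also have "Meq n \<dots> (replicate a n @ ((c - a) # replicate (b - a) n) @ s)"
  proof -
    have "Meq n ((b - a) # replicate (b - a) n @ [(c - a) - (b - a)]) ((c - a) # replicate (b - a) n)"
      using o by (intro Meq_complement) auto
    moreover have "(c - a) - (b - a) = c - b" using o by simp
    ultimately have "Meq n ((b - a) # replicate (b - a) n @ [c - b]) ((c - a) # replicate (b - a) n)"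
      by simp
    then show ?thesis by (rule Meq_append_congI[where a = "replicate a n" and b = s]) simp_all
  qed
  finally have "Meq n u (replicate a n @ [c - a] @ (replicate (b - a) n @ s))" by simp
  moreover have "Meq n w (replicate a n @ (replicate (b - a) n @ s))" using w2 rb by simp
  ultimately show ?thesis unfolding eq_by_left_complement_def using o by auto
qed

lemma trans_lt_gt:
  assumes mv: "Mword n v" and wv: "sum_list v < W"
    and ab: "eq_by_left_complement n a u b v" and bc: "eq_by_left_complement n b v c w"
    and o: "a < b" "c < b" "a < c" "b \<le> n"
  shows "eq_by_left_complement n a u c w"
proof -
  from ab o obtain t where u1: "Meq n u (replicate a n @ [b - a] @ t)"
    and v1: "Meq n v (replicate a n @ t)"
    unfolding eq_by_left_complement_def by auto
  from bc o obtain s where w2: "Meq n w (replicate c n @ [b - c] @ s)"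
    and v2: "Meq n v (replicate c n @ s)"
    unfolding eq_by_left_complement_def by auto
  have rc: "replicate c n = replicate a n @ replicate (c - a) n"
    using o by (simp add: replicate_add[symmetric])
  have "Meq n (replicate a n @ t) (replicate a n @ (replicate (c - a) n @ s))"
    using Meq.trans[OF Meq.sym[OF v1] v2] rc by simp
  then have t1: "Meq n t (replicate (c - a) n @ s)"
    using cancel_prefix Meq_Mword[OF v1 mv] Meq_sum_list[OF v1] wv by presburger
  have "Meq n u (replicate a n @ [b - a] @ t)" by (rule u1)
  also have "Meq n \<dots> (replicate a n @ [b - a] @ (replicate (c - a) n @ s))"
    by (rule Meq_append_congI[OF t1, of "replicate a n @ [b - a]" "[]"]) simp_all
  also have "Meq n \<dots> (replicate a n @ ((c - a) # replicate (c - a) n @ [b - c]) @ s)"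
  proof -
    have "Meq n ((c - a) # replicate (c - a) n @ [(b - a) - (c - a)]) ((b - a) # replicate (c - a) n)"
      using o by (intro Meq_complement) auto
    moreover have "(b - a) - (c - a) = b - c" using o by simp
    ultimately have "Meq n ((b - a) # replicate (c - a) n) ((c - a) # replicate (c - a) n @ [b - c])"
      by (simp add: Meq.sym)
    then show ?thesis by (rule Meq_append_congI[where a = "replicate a n" and b = s]) simp_all
  qed
  finally have "Meq n u (replicate a n @ [c - a] @ (replicate (c - a) n @ [b - c] @ s))" by simp
  moreover have "Meq n w (replicate a n @ (replicate (c - a) n @ [b - c] @ s))" using w2 rc by simp
  ultimately show ?thesis unfolding eq_by_left_complement_def using o by auto
qed

lemma trans_lt_eq:
  assumes mv: "Mword n v" and wv: "sum_list v < W"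
    and ab: "eq_by_left_complement n a u b v" and bc: "eq_by_left_complement n b v a w"
    and o: "a < b"
  shows "eq_by_left_complement n a u a w"
proof -
  from ab o obtain t where u1: "Meq n u (replicate a n @ [b - a] @ t)"
    and v1: "Meq n v (replicate a n @ t)"
    unfolding eq_by_left_complement_def by auto
  from bc o obtain s where w2: "Meq n w (replicate a n @ [b - a] @ s)"
    and v2: "Meq n v (replicate a n @ s)"
    unfolding eq_by_left_complement_def by auto
  have "Meq n t s"
    using cancel_prefix Meq.trans[OF Meq.sym[OF v1] v2] Meq_Mword[OF v1 mv] Meq_sum_list[OF v1] wv
    by presburger
  then have "Meq n (replicate a n @ [b - a] @ t) (replicate a n @ [b - a] @ s)"
    using Meq_append_left[of n t s "replicate a n @ [b - a]"] by simp
  then have "Meq n u w" using Meq.trans[OF u1 Meq.trans[OF _ Meq.sym[OF w2]]] by blast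
  then show ?thesis unfolding eq_by_left_complement_def by auto
qed

lemma trans_gt_lt:
  assumes mv: "Mword n v" and wv: "sum_list v < W"
    and ab: "eq_by_left_complement n a u b v" and bc: "eq_by_left_complement n b v c w"
    and o: "b < a" "b < c" "a \<le> c"
  shows "eq_by_left_complement n a u c w"
proof -
  from ab o obtain t where v1: "Meq n v (replicate b n @ [a - b] @ t)"
    and u1: "Meq n u (replicate b n @ t)"
    unfolding eq_by_left_complement_def by auto
  from bc o obtain s where v2: "Meq n v (replicate b n @ [c - b] @ s)"
    and w2: "Meq n w (replicate b n @ s)"
    unfolding eq_by_left_complement_def by auto
  have m1: "Mword n (replicate b n @ [a - b] @ t)" using Meq_Mword[OF v1 mv] .
  have s1: "sum_list (replicate b n @ [a - b] @ t) < W" using Meq_sum_list[OF v1] wv by simp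
  have "Meq n ([a - b] @ t) ([c - b] @ s)"
    using cancel_prefix[OF m1 s1 Meq.trans[OF Meq.sym[OF v1] v2]] .
  then have c1: "eq_by_left_complement n (a - b) t (c - b) s"
    using IH m1 s1 by (simp add: Mword_append)
  show ?thesis
  proof (cases "a = c")
    case True
    then have "Meq n t s" using c1 eq_by_left_complement_same_head by simp
    then have "Meq n (replicate b n @ t) (replicate b n @ s)" by (rule Meq_append_left)
    then have "Meq n u w" using Meq.trans[OF u1 Meq.trans[OF _ Meq.sym[OF w2]]] by blast
    then show ?thesis using True unfolding eq_by_left_complement_def by auto
  next
    case False
    with c1 o obtain r where t2: "Meq n t (replicate (a - b) n @ [c - a] @ r)"
      and s2: "Meq n s (replicate (a - b) n @ r)"
      unfolding eq_by_left_complement_def by auto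
    have ra: "replicate a n = replicate b n @ replicate (a - b) n"
      using o by (simp add: replicate_add[symmetric])
    have "Meq n u (replicate a n @ [c - a] @ r)"
      using Meq.trans[OF u1 Meq_append_left[OF t2]] ra by simp
    moreover have "Meq n w (replicate a n @ r)"
      using Meq.trans[OF w2 Meq_append_left[OF s2]] ra by simp
    ultimately show ?thesis unfolding eq_by_left_complement_def using False o by auto
  qed
qed

lemma eq_by_left_complement_trans_le:
  assumes mv: "Mword n v" and wv: "sum_list v < W"
    and ab: "eq_by_left_complement n a u b v" and bc: "eq_by_left_complement n b v c w"
    and r: "b \<le> n" "c \<le> n" and "a \<le> c"
  shows "eq_by_left_complement n a u c w"
proof -
  have "a = b \<or> b = c \<or> a < b \<and> b < c \<or> a < c \<and> c < b \<or> a = c \<and> a < b \<or> b < a"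
    using \<open>a \<le> c\<close> by linarith
  then consider "a = b" | "b = c" | "a < b" "b < c" | "a < c" "c < b" | "a = c" "a < b" | "b < a"
    by blast
  then show ?thesis
  proof cases
    case 1
    then show ?thesis
      using ab bc eq_by_left_complement_Meq_left eq_by_left_complement_same_head by blast
  next
    case 2
    then show ?thesis
      using ab bc eq_by_left_complement_Meq_right eq_by_left_complement_same_head
        eq_by_left_complement_sym by metis
  qed (use trans_lt_lt[OF mv wv ab bc] trans_lt_gt[OF mv wv ab bc] trans_lt_eq[OF mv wv ab]
      trans_gt_lt[OF mv wv ab bc] bc r \<open>a \<le> c\<close> in auto)
qed

lemma eq_by_left_complement_trans:
  assumes mv: "Mword n v" and wv: "sum_list v < W"
    and ab: "eq_by_left_complement n a u b v" and bc: "eq_by_left_complement n b v c w"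
    and r: "a \<le> n" "b \<le> n" "c \<le> n"
  shows "eq_by_left_complement n a u c w"
proof (cases "a \<le> c")
  case False
  then show ?thesis
    using eq_by_left_complement_trans_le[OF mv wv eq_by_left_complement_sym[OF bc]
        eq_by_left_complement_sym[OF ab]] eq_by_left_complement_sym r by simp
qed (use eq_by_left_complement_trans_le[OF mv wv ab bc] r in simp)

lemma Meq_step:
  assumes "Meq n x y" "Mword n x" "sum_list x = W" "x = a # u" "y = b # v"
  shows "eq_by_left_complement n a u b v"
  using assms
proof (induction arbitrary: a u b v rule: Meq.induct)
  case (step l r u' v')
  then obtain i where lr: "l = [1, n, i]" "r = [i + 1, n]" "1 \<le> i" "i \<le> n - 1"
    by (auto simp: Mrel_def)
  show ?case
  proof (cases u')
    case Nil
    then have "a = 1" "u = n # i # v'" "b = i + 1" "v = n # v'" using step.prems lr by auto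
    then show ?thesis unfolding eq_by_left_complement_def using lr by (auto intro: Meq.refl)
  next
    case (Cons d u'')
    then have "a = d" "b = d" "u = u'' @ l @ v'" "v = u'' @ r @ v'" using step.prems by auto
    then show ?thesis unfolding eq_by_left_complement_def using Meq.step[OF step.hyps] by auto
  qed
next
  case (refl w)
  then show ?case unfolding eq_by_left_complement_def by (auto intro: Meq.refl)
next
  case (sym x y)
  then show ?case
    using Meq_invariants[OF sym.hyps] eq_by_left_complement_sym by metis
next
  case (trans x y z)
  have my: "Mword n y" and sy: "sum_list y = W"
    using Meq_invariants[OF trans.hyps(1)] trans.prems by auto
  have "1 \<le> a" using trans.prems by (simp add: Mword_Cons)
  then obtain c w where y: "y = c # w" using sy trans.prems by (cases y) auto
  have mz: "Mword n z" using Meq_Mword[OF trans.hyps(2) my] .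
  show ?case
  proof (rule eq_by_left_complement_trans)
    show "eq_by_left_complement n a u c w" using trans.IH(1) trans.prems y by blast
    show "eq_by_left_complement n c w b v" using trans.IH(2) my sy trans.prems y by blast
  qed (use my sy y trans.prems mz in \<open>auto simp: Mword_Cons\<close>)
qed

end

lemma Meq_Cons_eq_by_left_complement:
  "Mword n (a # u) \<Longrightarrow> Meq n (a # u) (b # v) \<Longrightarrow> eq_by_left_complement n a u b v"
proof (induction "sum_list (a # u)" arbitrary: a u b v rule: less_induct)
  case less
  interpret left_complemented_below n "sum_list (a # u)"
    using less.hyps by unfold_locales blast
  show ?case by (rule Meq_step[OF less.prems(2,1)]) simp_all
qed

definition hook :: "nat \<Rightarrow> nat \<Rightarrow> nat list" where
  "hook n k = (if k = 0 then [] else k # replicate k n)"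

lemma hook_Suc: "hook n (Suc k) = Suc k # replicate k n @ [n]"
  by (simp add: hook_def replicate_append_same)

lemma hook_snoc:
  assumes "1 \<le> a" "a + m \<le> n"
  shows "Meq n (hook n m @ [a]) ((a + m) # replicate m n)"
proof (cases "m = 0")
  case True
  then show ?thesis by (simp add: hook_def Meq.refl)
next
  case False
  then have "Meq n (m # replicate m n @ [(a + m) - m]) ((a + m) # replicate m n)"
    using assms by (intro Meq_complement) auto
  then show ?thesis using False by (simp add: hook_def)
qed

lemma hook_snoc_eq_replicate:
  assumes "1 \<le> m" "m \<le> n"
  shows "Meq n (hook n (m - 1) @ [n + 1 - m]) (replicate m n)"
proof -
  have "Meq n (hook n (m - 1) @ [n + 1 - m]) ((n + 1 - m + (m - 1)) # replicate (m - 1) n)"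
    using assms by (intro hook_snoc) auto
  moreover have "(n + 1 - m + (m - 1)) # replicate (m - 1) n = replicate m n"
    using assms by (cases m) auto
  ultimately show ?thesis by simp
qed

lemma hook_append:
  assumes "x + y \<le> n"
  shows "Meq n (hook n x @ hook n y) (hook n (x + y))"
proof (cases "x = 0 \<or> y = 0")
  case True
  then show ?thesis by (auto simp: hook_def Meq.refl)
next
  case False
  have "Meq n (x # replicate x n @ [(x + y) - x]) ((x + y) # replicate x n)"
    using False assms by (intro Meq_complement) auto
  then have "Meq n ((x # replicate x n @ [(x + y) - x]) @ replicate y n)
      (((x + y) # replicate x n) @ replicate y n)"
    by (rule Meq_append_right)
  then show ?thesis using False by (simp add: hook_def replicate_add)
qed

lemma Meq_hook_snoc_Cons:
  assumes "1 \<le> q" "1 \<le> m" "q + m \<le> n"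
  shows "Meq n (hook n m @ [q]) ((q + m) # hook n (m - 1) @ [n + 1 - m])"
proof -
  have "Meq n (hook n m @ [q]) ((q + m) # replicate m n)"
    using assms by (intro hook_snoc) auto
  also have "Meq n \<dots> ((q + m) # hook n (m - 1) @ [n + 1 - m])"
    using Meq_Cons[OF Meq.sym[OF hook_snoc_eq_replicate[of m n]]] assms by simp
  finally show ?thesis .
qed

text \<open>For a < b and m = n + 1 - b, both u rho_a and v rho_b then equal t rho_(a+m) D_m.\<close>

definition eq_by_right_complement :: "nat \<Rightarrow> nat \<Rightarrow> nat list \<Rightarrow> nat \<Rightarrow> nat list \<Rightarrow> bool" where
  "eq_by_right_complement n a u b v \<longleftrightarrow> (a = b \<and> Meq n u v)
     \<or> (a < b \<and> (\<exists>t. Meq n u (t @ hook n (n + 1 - b))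
                   \<and> Meq n v (t @ (a + (n + 1 - b)) # hook n (n - b))))
     \<or> (b < a \<and> (\<exists>t. Meq n v (t @ hook n (n + 1 - a))
                   \<and> Meq n u (t @ (b + (n + 1 - a)) # hook n (n - a))))"

lemma eq_by_right_complement_sym:
  "eq_by_right_complement n a u b v \<Longrightarrow> eq_by_right_complement n b v a u"
  unfolding eq_by_right_complement_def by (auto intro: Meq.sym)

lemma eq_by_right_complement_Meq_left:
  "Meq n u u' \<Longrightarrow> eq_by_right_complement n a u' c w \<Longrightarrow> eq_by_right_complement n a u c w"
  unfolding eq_by_right_complement_def by (meson Meq.trans Meq.sym)

lemma eq_by_right_complement_Meq_right:
  "Meq n w w' \<Longrightarrow> eq_by_right_complement n a u c w' \<Longrightarrow> eq_by_right_complement n a u c w"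
  unfolding eq_by_right_complement_def by (meson Meq.trans Meq.sym)

lemma eq_by_right_complement_same_last: "eq_by_right_complement n a u a v \<Longrightarrow> Meq n u v"
  unfolding eq_by_right_complement_def by auto

locale right_complemented_below =
  fixes n W :: nat
  assumes IH: "\<And>a u b v. Mword n (u @ [a]) \<Longrightarrow> sum_list (u @ [a]) < W \<Longrightarrow>
    Meq n (u @ [a]) (v @ [b]) \<Longrightarrow> eq_by_right_complement n a u b v"
begin

lemma cancel_suffix:
  "Mword n (t @ z) \<Longrightarrow> sum_list (t @ z) < W \<Longrightarrow> Meq n (t @ z) (s @ z) \<Longrightarrow> Meq n t s"
proof (induction z rule: rev_induct)
  case (snoc d z)
  have "eq_by_right_complement n d (t @ z) d (s @ z)" using IH snoc.prems by simp
  then have "Meq n (t @ z) (s @ z)" by (rule eq_by_right_complement_same_last)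
  then show ?case using snoc by (auto simp: Mword_append)
qed simp

lemma Meq_snoc_cancel_hook:
  "1 \<le> p \<Longrightarrow> p + k \<le> n \<Longrightarrow> Mword n (x @ (p + k) # replicate k n) \<Longrightarrow>
    sum_list (x @ (p + k) # replicate k n) < W \<Longrightarrow>
    Meq n (x @ (p + k) # replicate k n) (y @ [p]) \<Longrightarrow> Meq n y (x @ hook n k)"
proof (induction k arbitrary: p y)
  case 0
  then have "eq_by_right_complement n p x p y" using IH by simp
  then show ?case by (simp add: hook_def eq_by_right_complement_same_last Meq.sym)
next
  case (Suc k)
  have "eq_by_right_complement n n (x @ (p + Suc k) # replicate k n) p y"
    using IH Suc.prems by (simp add: replicate_append_same[symmetric])
  moreover have "p < n" using Suc.prems by simp
  ultimately obtain t where y1: "Meq n y (t @ [1, n])"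
    and x1: "Meq n (x @ (p + Suc k) # replicate k n) (t @ [p + 1])"
    unfolding eq_by_right_complement_def by (auto simp: hook_def)
  have t1: "Meq n t (x @ hook n k)"
    using Suc.IH[of "p + 1" t] Suc.prems x1 by (simp add: Mword_append Mword_Cons)
  note y1
  also have "Meq n (t @ [1, n]) ((x @ hook n k) @ [1, n])" using t1 by (rule Meq_append_right)
  also have "Meq n \<dots> (x @ ((1 + k) # replicate k n) @ [n])"
  proof -
    have "Meq n (hook n k @ [1]) ((1 + k) # replicate k n)"
      using hook_snoc[of 1 k n] Suc.prems(2) by simp
    then show ?thesis by (rule Meq_append_congI[where a = x and b = "[n]"]) simp_all
  qed
  also have "\<dots> = x @ hook n (Suc k)" by (simp add: hook_Suc)
  finally show ?case .
qed

lemma cancel_hook: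
  assumes "1 \<le> p" "p + k \<le> n" and mx: "Mword n (x @ hook n (p + k))"
    and sx: "sum_list (x @ hook n (p + k)) < W" and eq: "Meq n (x @ hook n (p + k)) (y @ hook n p)"
  shows "Meq n y (x @ hook n k)"
proof -
  have "replicate (p + k) n = replicate k n @ replicate p n"
    by (simp add: replicate_add[symmetric] add.commute)
  then have split: "x @ hook n (p + k) = (x @ (p + k) # replicate k n) @ replicate p n"
    and hook_p: "y @ hook n p = (y @ [p]) @ replicate p n"
    using assms(1) by (simp_all add: hook_def)
  have "Meq n (x @ (p + k) # replicate k n) (y @ [p])"
    using cancel_suffix mx sx eq unfolding split hook_p by blast
  moreover have "Mword n (x @ (p + k) # replicate k n)"
    and "sum_list (x @ (p + k) # replicate k n) < W"
    using mx sx unfolding split by (auto simp: Mword_def)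
  ultimately show ?thesis using Meq_snoc_cancel_hook assms(1,2) by blast
qed

lemma trans_lt_lt:
  assumes mv: "Mword n v" and wv: "sum_list v < W"
    and ab: "eq_by_right_complement n a u b v" and bc: "eq_by_right_complement n b v c w"
    and o: "1 \<le> a" "a < b" "b < c" "c \<le> n"
  shows "eq_by_right_complement n a u c w"
proof -
  define mc k where "mc = n + 1 - c" and "k = c - b - 1"
  have mb: "n + 1 - b = k + 1 + mc" and nb: "n - b = mc + k" and bmc: "b + mc = n - k"
    and "1 \<le> mc" "mc + k \<le> n" "k + 1 + mc \<le> n" "a + mc + (k + 1) \<le> n"
    using o unfolding mc_def k_def by auto
  from ab o obtain t where u1: "Meq n u (t @ hook n (k + 1 + mc))"
    and v1: "Meq n v ((t @ [a + (k + 1 + mc)]) @ hook n (mc + k))"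
    unfolding eq_by_right_complement_def mb nb by auto
  from bc o obtain s where v2: "Meq n v (s @ hook n mc)"
    and w2: "Meq n w (s @ (b + mc) # hook n (n - c))"
    unfolding eq_by_right_complement_def mc_def by auto
  have s1: "Meq n s ((t @ [a + (k + 1 + mc)]) @ hook n k)"
    using cancel_hook[OF _ _ Meq_Mword[OF v1 mv] _ Meq.trans[OF Meq.sym[OF v1] v2]]
      Meq_sum_list[OF v1] wv \<open>1 \<le> mc\<close> \<open>mc + k \<le> n\<close> by simp
  have "Meq n w (t @ ((a + mc + (k + 1)) # hook n k @ [b + mc]) @ hook n (n - c))"
    using Meq.trans[OF w2 Meq_append_right[OF s1]] by (simp add: algebra_simps)
  also have "Meq n \<dots> (t @ (hook n (k + 1) @ [a + mc]) @ hook n (n - c))"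
  proof (rule Meq_append_congI[OF Meq.sym, where a = t and b = "hook n (n - c)"])
    show "Meq n (hook n (k + 1) @ [a + mc]) ((a + mc + (k + 1)) # hook n k @ [b + mc])"
      using Meq_hook_snoc_Cons[of "a + mc" "k + 1" n] o \<open>a + mc + (k + 1) \<le> n\<close>
      unfolding bmc by simp
  qed simp_all
  finally have "Meq n w ((t @ hook n (k + 1)) @ (a + mc) # hook n (n - c))"
    by simp
  moreover have "Meq n u ((t @ hook n (k + 1)) @ hook n mc)"
    using Meq.trans[OF u1 Meq_append_left[OF Meq.sym[OF hook_append[of "k + 1" mc n]]]]
      \<open>k + 1 + mc \<le> n\<close> by simp
  ultimately show ?thesis
    unfolding eq_by_right_complement_def mc_def[symmetric] using o
    by (auto intro!: exI[of _ "t @ hook n (k + 1)"])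
qed

lemma trans_lt_gt:
  assumes mv: "Mword n v" and wv: "sum_list v < W"
    and ab: "eq_by_right_complement n a u b v" and bc: "eq_by_right_complement n b v c w"
    and o: "1 \<le> a" "a < c" "c < b" "b \<le> n"
  shows "eq_by_right_complement n a u c w"
proof -
  define mb m where "mb = n + 1 - b" and "m = b - c"
  have ar: "n + 1 - (c + mb) = m" "m + mb = n + 1 - c" "n - (c + mb) + mb = n - c"
    "a + mb + m = a + (n + 1 - c)" "m + mb \<le> n"
    using o unfolding mb_def m_def by auto
  from ab o obtain t where u1: "Meq n u (t @ hook n mb)"
    and v1: "Meq n v ((t @ [a + mb]) @ hook n (n - b))"
    unfolding eq_by_right_complement_def mb_def by auto
  from bc o obtain s where w2: "Meq n w (s @ hook n mb)"
    and v2: "Meq n v ((s @ [c + mb]) @ hook n (n - b))"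
    unfolding eq_by_right_complement_def mb_def by auto
  have m1: "Mword n ((t @ [a + mb]) @ hook n (n - b))" using Meq_Mword[OF v1 mv] .
  have s1: "sum_list ((t @ [a + mb]) @ hook n (n - b)) < W" using Meq_sum_list[OF v1] wv by simp
  have "Meq n (t @ [a + mb]) (s @ [c + mb])"
    using cancel_suffix[OF m1 s1 Meq.trans[OF Meq.sym[OF v1] v2]] .
  moreover have "Mword n (t @ [a + mb])" "sum_list (t @ [a + mb]) < W"
    using m1 s1 by (auto simp: Mword_def)
  ultimately have "eq_by_right_complement n (a + mb) t (c + mb) s"
    using IH by blast
  then obtain r where t2: "Meq n t (r @ hook n m)"
    and s3: "Meq n s (r @ (a + mb + m) # hook n (n - (c + mb)))"
    unfolding eq_by_right_complement_def ar(1) using o by auto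
  have "Meq n u (r @ hook n m @ hook n mb)"
    using Meq.trans[OF u1 Meq_append_right[OF t2]] by simp
  also have "Meq n \<dots> (r @ hook n (n + 1 - c))"
    using Meq_append_left[OF hook_append[of m mb n]] ar by simp
  finally have u3: "Meq n u (r @ hook n (n + 1 - c))" .
  have "Meq n w (r @ (a + mb + m) # hook n (n - (c + mb)) @ hook n mb)"
    using Meq.trans[OF w2 Meq_append_right[OF s3]] by simp
  also have "Meq n \<dots> (r @ (a + mb + m) # hook n (n - c))"
    using Meq_append_left[OF Meq_Cons[OF hook_append[of "n - (c + mb)" mb n]]] ar by simp
  also have "\<dots> = r @ (a + (n + 1 - c)) # hook n (n - c)"
    by (simp only: ar(4))
  finally show ?thesis unfolding eq_by_right_complement_def using o u3 by blast
qed

lemma trans_lt_eq: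
  assumes mv: "Mword n v" and wv: "sum_list v < W"
    and ab: "eq_by_right_complement n a u b v" and bc: "eq_by_right_complement n b v a w"
    and o: "a < b"
  shows "eq_by_right_complement n a u a w"
proof -
  define mb where "mb = n + 1 - b"
  from ab o obtain t where u1: "Meq n u (t @ hook n mb)"
    and v1: "Meq n v (t @ (a + mb) # hook n (n - b))"
    unfolding eq_by_right_complement_def mb_def by auto
  from bc o obtain s where w2: "Meq n w (s @ hook n mb)"
    and v2: "Meq n v (s @ (a + mb) # hook n (n - b))"
    unfolding eq_by_right_complement_def mb_def by auto
  have "Meq n t s"
    using cancel_suffix[OF Meq_Mword[OF v1 mv] _ Meq.trans[OF Meq.sym[OF v1] v2]]
      Meq_sum_list[OF v1] wv by simp
  then have "Meq n u w"
    using Meq.trans[OF u1 Meq.trans[OF Meq_append_right Meq.sym[OF w2]]] by blast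
  then show ?thesis unfolding eq_by_right_complement_def by auto
qed

lemma trans_gt_lt:
  assumes mv: "Mword n v" and wv: "sum_list v < W"
    and ab: "eq_by_right_complement n a u b v" and bc: "eq_by_right_complement n b v c w"
    and o: "1 \<le> b" "b < a" "a < c" "c \<le> n"
  shows "eq_by_right_complement n a u c w"
proof -
  define mc k where "mc = n + 1 - c" and "k = c - a"
  have ma: "n + 1 - a = mc + k" and na: "n - a = k - 1 + mc" and nk: "n + 1 - k = a + mc"
    and "1 \<le> mc" "1 \<le> k" "mc + k \<le> n" "b + mc + k \<le> n"
    using o unfolding mc_def k_def by auto
  from ab o obtain t where v1: "Meq n v (t @ hook n (mc + k))"
    and u1: "Meq n u (t @ (b + mc + k) # hook n (n - a))"
    unfolding eq_by_right_complement_def ma by (auto simp: algebra_simps)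
  from bc o obtain s where v2: "Meq n v (s @ hook n mc)"
    and w2: "Meq n w (s @ (b + mc) # hook n (n - c))"
    unfolding eq_by_right_complement_def mc_def by auto
  have s1: "Meq n s (t @ hook n k)"
    using cancel_hook[OF _ _ Meq_Mword[OF v1 mv] _ Meq.trans[OF Meq.sym[OF v1] v2]]
      Meq_sum_list[OF v1] wv \<open>1 \<le> mc\<close> \<open>mc + k \<le> n\<close> by simp
  have "Meq n w (t @ (hook n k @ [b + mc]) @ hook n (n - c))"
    using Meq.trans[OF w2 Meq_append_right[OF s1]] by simp
  also have "Meq n \<dots> (t @ ((b + mc + k) # hook n (k - 1) @ [a + mc]) @ hook n (n - c))"
    using Meq_hook_snoc_Cons[of "b + mc" k n] o \<open>1 \<le> k\<close> \<open>b + mc + k \<le> n\<close> nk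
    by (intro Meq_append_left Meq_append_right) (simp add: algebra_simps)
  finally have "Meq n w ((t @ (b + mc + k) # hook n (k - 1)) @ (a + mc) # hook n (n - c))"
    by simp
  moreover have "Meq n u ((t @ (b + mc + k) # hook n (k - 1)) @ hook n mc)"
  proof -
    have "Meq n (hook n (n - a)) (hook n (k - 1) @ hook n mc)"
      using Meq.sym[OF hook_append[of "k - 1" mc n]] na \<open>mc + k \<le> n\<close> by simp
    then show ?thesis using Meq.trans[OF u1 Meq_append_left[OF Meq_Cons]] by simp
  qed
  ultimately show ?thesis
    unfolding eq_by_right_complement_def mc_def[symmetric] using o
    by (auto intro!: exI[of _ "t @ (b + mc + k) # hook n (k - 1)"])
qed

lemma trans_gt_eq:
  assumes mv: "Mword n v" and wv: "sum_list v < W"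
    and ab: "eq_by_right_complement n a u b v" and bc: "eq_by_right_complement n b v a w"
    and o: "b < a"
  shows "eq_by_right_complement n a u a w"
proof -
  define ma where "ma = n + 1 - a"
  from ab o obtain t where v1: "Meq n v (t @ hook n ma)"
    and u1: "Meq n u (t @ (b + ma) # hook n (n - a))"
    unfolding eq_by_right_complement_def ma_def by auto
  from bc o obtain s where v2: "Meq n v (s @ hook n ma)"
    and w2: "Meq n w (s @ (b + ma) # hook n (n - a))"
    unfolding eq_by_right_complement_def ma_def by auto
  have "Meq n t s"
    using cancel_suffix[OF Meq_Mword[OF v1 mv] _ Meq.trans[OF Meq.sym[OF v1] v2]]
      Meq_sum_list[OF v1] wv by simp
  then have "Meq n u w"
    using Meq.trans[OF u1 Meq.trans[OF Meq_append_right Meq.sym[OF w2]]] by blast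
  then show ?thesis unfolding eq_by_right_complement_def by auto
qed

lemma eq_by_right_complement_trans_le:
  assumes mv: "Mword n v" and wv: "sum_list v < W"
    and ab: "eq_by_right_complement n a u b v" and bc: "eq_by_right_complement n b v c w"
    and r: "1 \<le> a" "1 \<le> b" "b \<le> n" "c \<le> n" and "a \<le> c"
  shows "eq_by_right_complement n a u c w"
proof -
  have "a = b \<or> b = c \<or> a < b \<and> b < c \<or> a < c \<and> c < b \<or> a = c \<and> a < b
      \<or> b < a \<and> a < c \<or> b < a \<and> a = c"
    using \<open>a \<le> c\<close> by linarith
  then consider "a = b" | "b = c" | "a < b" "b < c" | "a < c" "c < b" | "a = c" "a < b"
    | "b < a" "a < c" | "b < a" "a = c"
    by blast
  then show ?thesis
  proof cases
    case 1
    then show ?thesis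
      using ab bc eq_by_right_complement_Meq_left eq_by_right_complement_same_last by blast
  next
    case 2
    then show ?thesis
      using ab bc eq_by_right_complement_Meq_right eq_by_right_complement_same_last
        eq_by_right_complement_sym by metis
  qed (use trans_lt_lt[OF mv wv ab bc] trans_lt_gt[OF mv wv ab bc] trans_lt_eq[OF mv wv ab]
      trans_gt_lt[OF mv wv ab bc] trans_gt_eq[OF mv wv ab] bc r in auto)
qed

lemma eq_by_right_complement_trans:
  assumes mv: "Mword n v" and wv: "sum_list v < W"
    and ab: "eq_by_right_complement n a u b v" and bc: "eq_by_right_complement n b v c w"
    and r: "1 \<le> a" "1 \<le> b" "1 \<le> c" "a \<le> n" "b \<le> n" "c \<le> n"
  shows "eq_by_right_complement n a u c w"
proof (cases "a \<le> c")
  case False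
  then show ?thesis
    using eq_by_right_complement_trans_le[OF mv wv eq_by_right_complement_sym[OF bc]
        eq_by_right_complement_sym[OF ab]] eq_by_right_complement_sym r by simp
qed (use eq_by_right_complement_trans_le[OF mv wv ab bc] r in simp)

lemma Meq_step:
  assumes "Meq n x y" "Mword n x" "sum_list x = W" "x = u @ [a]" "y = v @ [b]"
  shows "eq_by_right_complement n a u b v"
  using assms
proof (induction arbitrary: a u b v rule: Meq.induct)
  case (step l r u' v')
  then obtain i where lr: "l = [1, n, i]" "r = [i + 1, n]" "1 \<le> i" "i \<le> n - 1"
    by (auto simp: Mrel_def)
  show ?case
  proof (cases v' rule: rev_exhaust)
    case Nil
    then have "a = i" "u = u' @ [1, n]" "b = n" "v = u' @ [i + 1]" using step.prems lr by auto
    moreover have "hook n (n + 1 - n) = [1, n]" "hook n (n - n) = []" by (simp_all add: hook_def)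
    ultimately show ?thesis
      unfolding eq_by_right_complement_def using lr by (auto intro: Meq.refl)
  next
    case (snoc v'' d)
    then have "a = d" "b = d" "u = u' @ l @ v''" "v = u' @ r @ v''" using step.prems by auto
    then show ?thesis unfolding eq_by_right_complement_def using Meq.step[OF step.hyps] by auto
  qed
next
  case (refl w)
  then show ?case unfolding eq_by_right_complement_def by (auto intro: Meq.refl)
next
  case (sym x y)
  then show ?case
    using Meq_invariants[OF sym.hyps] eq_by_right_complement_sym by metis
next
  case (trans x y z)
  have my: "Mword n y" and sy: "sum_list y = W"
    using Meq_invariants[OF trans.hyps(1)] trans.prems by auto
  have "1 \<le> a" using trans.prems by (simp add: Mword_append Mword_Cons)
  then obtain w c where y: "y = w @ [c]" using sy trans.prems by (cases y rule: rev_exhaust) auto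
  have mz: "Mword n z" using Meq_Mword[OF trans.hyps(2) my] .
  show ?case
  proof (rule eq_by_right_complement_trans)
    show "eq_by_right_complement n a u c w" using trans.IH(1) trans.prems y by blast
    show "eq_by_right_complement n c w b v" using trans.IH(2) my sy trans.prems y by blast
  qed (use my sy y trans.prems mz in \<open>auto simp: Mword_append Mword_Cons\<close>)
qed

end

lemma Meq_snoc_eq_by_right_complement:
  "Mword n (u @ [a]) \<Longrightarrow> Meq n (u @ [a]) (v @ [b]) \<Longrightarrow> eq_by_right_complement n a u b v"
proof (induction "sum_list (u @ [a])" arbitrary: a u b v rule: less_induct)
  case less
  interpret right_complemented_below n "sum_list (u @ [a])"
    using less.hyps by unfold_locales blast
  show ?case by (rule Meq_step[OF less.prems(2,1)]) simp_all
qed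

lemma replicate_eq_Cons: "1 \<le> n \<Longrightarrow> replicate n x = x # replicate (n - 1) x"
  by (cases n) auto

lemma Mldiv_generator_power:
  assumes "1 \<le> i" "i \<le> n"
  shows "Mldiv n [i] (replicate n n)"
proof (cases "i = n")
  case True
  then show ?thesis unfolding Mldiv_def using assms
    by (intro exI[of _ "replicate (n - 1) n"]) (auto simp: Mword_def Meq.refl replicate_eq_Cons[of n n])
next
  case False
  then have "i < n" using assms by simp
  have "Meq n (i # replicate i n @ [n - i]) (n # replicate i n)"
    using assms \<open>i < n\<close> by (intro Meq_complement) auto
  then have "Meq n ((i # replicate i n @ [n - i]) @ replicate (n - 1 - i) n)
      ((n # replicate i n) @ replicate (n - 1 - i) n)"
    by (rule Meq_append_right)
  moreover have "(n # replicate i n) @ replicate (n - 1 - i) n = replicate n n"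
    using \<open>i < n\<close> by (simp add: replicate_add[symmetric] replicate_eq_Cons[of n n])
  ultimately have "Meq n ([i] @ replicate i n @ [n - i] @ replicate (n - 1 - i) n) (replicate n n)"
    by simp
  moreover have "Mword n (replicate i n @ [n - i] @ replicate (n - 1 - i) n)"
    using \<open>i < n\<close> assms by (auto simp: Mword_def)
  ultimately show ?thesis unfolding Mldiv_def by blast
qed

lemma Mrdiv_generator_power:
  assumes "1 \<le> i" "i \<le> n"
  shows "Mrdiv n [i] (replicate n n)"
proof (cases "i = n")
  case True
  then show ?thesis unfolding Mrdiv_def using assms
    by (intro exI[of _ "replicate (n - 1) n"])
      (auto simp: Mword_def Meq.refl replicate_append_same replicate_eq_Cons[of n n])
next
  case False
  then have "i < n" using assms by simp
  have "Meq n ((n - i) # replicate (n - i) n @ [n - (n - i)]) (n # replicate (n - i) n)"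
    using assms \<open>i < n\<close> by (intro Meq_complement) auto
  then have "Meq n (replicate (i - 1) n @ ((n - i) # replicate (n - i) n @ [i]))
      (replicate (i - 1) n @ (n # replicate (n - i) n))"
    using assms \<open>i < n\<close> by (intro Meq_append_left) simp
  moreover have "replicate (i - 1) n @ (n # replicate (n - i) n) = replicate n n"
    using assms \<open>i < n\<close> replicate_add[of "i - 1" "Suc (n - i)" n] by simp
  ultimately have "Meq n ((replicate (i - 1) n @ [n - i] @ replicate (n - i) n) @ [i]) (replicate n n)"
    by simp
  moreover have "Mword n (replicate (i - 1) n @ [n - i] @ replicate (n - i) n)"
    using \<open>i < n\<close> assms by (auto simp: Mword_def)
  ultimately show ?thesis unfolding Mrdiv_def by blast
qed

lemma Mldiv_power_if_Mldiv_last_two: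
  assumes "2 \<le> n" and "Mldiv n [n - 1] m" and "Mldiv n [n] m"
  shows "Mldiv n (replicate n n) m"
proof -
  obtain c1 c2 where c1: "Mword n c1" "Meq n ((n - 1) # c1) m"
    and c2: "Mword n c2" "Meq n (n # c2) m"
    using assms(2,3) unfolding Mldiv_def by auto
  have "eq_by_left_complement n (n - 1) c1 n c2"
    using Meq_Cons_eq_by_left_complement[OF _ Meq.trans[OF c1(2) Meq.sym[OF c2(2)]]] c1(1) assms(1)
    by (simp add: Mword_Cons)
  then obtain t where t: "Meq n c2 (replicate (n - 1) n @ t)"
    using assms(1) unfolding eq_by_left_complement_def by auto
  have "Mword n t" using Meq_Mword[OF t c2(1)] by (simp add: Mword_append)
  moreover have "Meq n (replicate n n @ t) m"
    using Meq.trans[OF Meq.sym[OF Meq_Cons[OF t]] c2(2)] assms(1) by (simp add: replicate_eq_Cons[of n n])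
  ultimately show ?thesis unfolding Mldiv_def by blast
qed

lemma Mrdiv_power_if_Mrdiv_first_two:
  assumes "2 \<le> n" and "Mrdiv n [1] m" and "Mrdiv n [2] m"
  shows "Mrdiv n (replicate n n) m"
proof -
  obtain c1 c2 where c1: "Mword n c1" "Meq n (c1 @ [1]) m"
    and c2: "Mword n c2" "Meq n (c2 @ [2]) m"
    using assms(2,3) unfolding Mrdiv_def by auto
  have "eq_by_right_complement n 1 c1 2 c2"
    using Meq_snoc_eq_by_right_complement[OF _ Meq.trans[OF c1(2) Meq.sym[OF c2(2)]]] c1(1) assms(1)
    by (simp add: Mword_def)
  then obtain t where t: "Meq n c1 (t @ hook n (n - 1))"
    using assms(1) unfolding eq_by_right_complement_def by auto
  have "Mword n t" using Meq_Mword[OF t c1(1)] by (simp add: Mword_append)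
  moreover have "Meq n (t @ replicate n n) m"
  proof -
    have "Meq n (t @ hook n (n - 1) @ [1]) (t @ (1 + (n - 1)) # replicate (n - 1) n)"
      using assms(1) by (intro Meq_append_left hook_snoc) auto
    then have "Meq n (t @ replicate n n) (t @ hook n (n - 1) @ [1])"
      using assms(1) by (simp add: replicate_eq_Cons[of n n] Meq.sym)
    moreover have "Meq n (t @ hook n (n - 1) @ [1]) m"
      using Meq.trans[OF Meq.sym[OF Meq_append_right[OF t]] c1(2)] by simp
    ultimately show ?thesis by (rule Meq.trans)
  qed
  ultimately show ?thesis unfolding Mrdiv_def by blast
qed

lemma is_right_lcm_generators:
  assumes "1 \<le> n"
  shows "is_right_lcm n {[i] | i. 1 \<le> i \<and> i \<le> n} (replicate n n)"
  unfolding is_right_lcm_def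
proof (intro conjI ballI allI impI)
  show "Mword n (replicate n n)" using assms by (auto simp: Mword_def)
  show "Mldiv n s (replicate n n)" if "s \<in> {[i] | i. 1 \<le> i \<and> i \<le> n}" for s
    using that Mldiv_generator_power by auto
  show "Mldiv n (replicate n n) m" if "Mword n m \<and> (\<forall>s\<in>{[i] | i. 1 \<le> i \<and> i \<le> n}. Mldiv n s m)"
    for m
  proof (cases "n = 1")
    case True
    then show ?thesis using that by auto
  next
    case False
    then show ?thesis using that assms by (intro Mldiv_power_if_Mldiv_last_two) auto
  qed
qed

lemma is_left_lcm_generators:
  assumes "1 \<le> n"
  shows "is_left_lcm n {[i] | i. 1 \<le> i \<and> i \<le> n} (replicate n n)"
  unfolding is_left_lcm_def
proof (intro conjI ballI allI impI)
  show "Mword n (replicate n n)" using assms by (auto simp: Mword_def)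
  show "Mrdiv n s (replicate n n)" if "s \<in> {[i] | i. 1 \<le> i \<and> i \<le> n}" for s
    using that Mrdiv_generator_power by auto
  show "Mrdiv n (replicate n n) m" if "Mword n m \<and> (\<forall>s\<in>{[i] | i. 1 \<le> i \<and> i \<le> n}. Mrdiv n s m)"
    for m
  proof (cases "n = 1")
    case True
    then show ?thesis using that by auto
  next
    case False
    then show ?thesis using that assms by (intro Mrdiv_power_if_Mrdiv_first_two) auto
  qed
qed

lemma Meq_Cons_replicate_alternating:
  "1 \<le> i \<Longrightarrow> i \<le> n \<Longrightarrow> Meq n (i # replicate (i - 1) n) (concat (replicate (i - 1) [1, n]) @ [1])"
proof (induction i)
  case (Suc i)
  show ?case
  proof (cases "i = 0")
    case True
    then show ?thesis by (simp add: Meq.refl)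
  next
    case False
    have "Suc i # replicate (Suc i - 1) n = [] @ [i + 1, n] @ replicate (i - 1) n"
      using False by (cases i) auto
    also have "Meq n \<dots> ([] @ [1, n, i] @ replicate (i - 1) n)"
      by (rule Meq.sym, rule Meq_rel) (use False Suc.prems in auto)
    also have "\<dots> = [1, n] @ (i # replicate (i - 1) n)" by simp
    also have "Meq n \<dots> ([1, n] @ (concat (replicate (i - 1) [1, n]) @ [1]))"
      using Suc False by (intro Meq_append_left) auto
    also have "\<dots> = concat (replicate (Suc i - 1) [1, n]) @ [1]"
      using False by (cases i) auto
    finally show ?thesis .
  qed
qed simp

lemma concat_replicate_swap: "[a] @ concat (replicate k [b, a]) = concat (replicate k [a, b]) @ [a]"
  by (induction k) auto

theorem corollary4p16:
  fixes n :: nat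
  assumes "n \<ge> 1"
  shows "is_right_lcm n {[i] | i. 1 \<le> i \<and> i \<le> n} (replicate n n)
       \<and> is_left_lcm n {[i] | i. 1 \<le> i \<and> i \<le> n} (replicate n n)
       \<and> Meq n (replicate n n) ([1] @ concat (replicate (n - 1) [n, 1]))"
proof (intro conjI)
  show "is_right_lcm n {[i] | i. 1 \<le> i \<and> i \<le> n} (replicate n n)"
    using assms by (rule is_right_lcm_generators)
  show "is_left_lcm n {[i] | i. 1 \<le> i \<and> i \<le> n} (replicate n n)"
    using assms by (rule is_left_lcm_generators)
  show "Meq n (replicate n n) ([1] @ concat (replicate (n - 1) [n, 1]))"
    using Meq_Cons_replicate_alternating[of n n] assms
    unfolding concat_replicate_swap replicate_eq_Cons[OF assms] by simp
qed

end
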